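(* Let $f:\mathbb{R}^d\to\mathbb{R}$ be convex and $L$-smooth with a minimizer $x^\star$, and let $x_0\in\mathbb{R}^d$ satisfy $f(x_0)-f(x^\star)\le\Delta_0$. Fix an integer $N\ge1$, let $v_0=\mathbf{0}$ and for $k=0,\dots,N-1$, $$v_{k+1}=v_k+\frac{12}{L(N-k+1)(N-k+2)(N-k+3)}\nabla f(x_k),\qquad x_{k+1}=x_k-\frac1L\nabla f(x_k)-\frac{(N-k)(N-k+1)(N-k+2)}{6}v_{k+1}.$$ Define $\delta_{k+1}=\frac{12}{(N-k+1)(N-k+2)(N-k+3)}$ for $k=0,\dots,N$. Then $$\sum_{k=0}^{N}\frac{\delta_{k+1}}{2}\|\nabla f(x_k)\|^2\le\frac{12L\Delta_0}{(N+2)(N+3)}.$$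
   Context: $L$-smooth means $\|\nabla f(x)-\nabla f(y)\|\le L\|x-y\|$ for all $x,y$; $\|\cdot\|$ is the Euclidean norm. The iteration is called the memory-saving OGM-G (M-OGM-G). *)

theory Defs
  imports "HOL-Analysis.Analysis"
begin

end

theory Submission
  imports Defs
begin

(* A potential-function argument. For convex L-smooth f every interpolation gap
   Q(y, z) = f y - f z - <grad f z, y - z> - |grad f y - grad f z|^2 / (2 L) is nonnegative.
   One step of M-OGM-G changes an explicit potential (mogm_potential, indexed by the number
   n = N - k of remaining steps) by exactly a weighted gap Q(x_k, x_(k+1)) plus tangent-plane
   terms at x_k; summing the steps telescopes, and adding the gaps Q(x_N, x_k) with the weights
   delta_(k+1) cancels the leftover tangent terms because L v_N = sum_k delta_(k+1) grad f(x_k).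
   What remains is
     0 <= rho (f x_0 - f x_N + (|grad f x_0|^2 + |grad f x_N|^2) / (2 L))
          - sum_(k <= N) delta_(k+1) |grad f x_k|^2 / (2 L),   rho = 6 / ((N+2)(N+3)),
   and |grad f y|^2 / (2 L) <= f y - f x* at y = x_0 and y = x_N finishes the proof. *)

lemma has_real_derivative_along_line:
  fixes f :: "'a::real_normed_vector \<Rightarrow> real"
  assumes "(f has_derivative f') (at (x + t *\<^sub>R d))"
  shows "((\<lambda>t. f (x + t *\<^sub>R d)) has_real_derivative f' d) (at t)"
proof -
  have "((\<lambda>t. x + t *\<^sub>R d) has_derivative (\<lambda>s. s *\<^sub>R d)) (at t)"
    by (auto intro!: derivative_eq_intros)
  from has_derivative_compose[OF this assms]
  have "((\<lambda>t. f (x + t *\<^sub>R d)) has_derivative (\<lambda>s. f' d * s)) (at t)"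
    using has_derivative_linear[OF assms] by (simp add: linear_scale mult.commute)
  then show ?thesis
    by (simp add: has_field_derivative_def)
qed

lemma convex_on_gradient_inequality:
  fixes f :: "'a::real_inner \<Rightarrow> real"
  assumes grad: "\<And>y. (f has_derivative (\<lambda>h. g y \<bullet> h)) (at y)"
    and convex: "convex_on UNIV f"
  shows "f x + g x \<bullet> (y - x) \<le> f y"
proof -
  define d where "d = y - x"
  define \<phi> where "\<phi> t = f (x + t *\<^sub>R d)" for t
  have "convex_on UNIV \<phi>"
  proof (rule convex_onI)
    fix t a b :: real
    assume "0 < t" "t < 1"
    moreover have "x + ((1 - t) *\<^sub>R a + t *\<^sub>R b) *\<^sub>R d
        = (1 - t) *\<^sub>R (x + a *\<^sub>R d) + t *\<^sub>R (x + b *\<^sub>R d)"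
      by (simp add: algebra_simps)
    ultimately show "\<phi> ((1 - t) *\<^sub>R a + t *\<^sub>R b) \<le> (1 - t) * \<phi> a + t * \<phi> b"
      unfolding \<phi>_def using convex_onD[OF convex, of t "x + a *\<^sub>R d" "x + b *\<^sub>R d"] by simp
  qed simp
  moreover have "(\<phi> has_real_derivative g x \<bullet> d) (at 0)"
    unfolding \<phi>_def using has_real_derivative_along_line[where x=x and t=0 and d=d, OF grad] by simp
  ultimately have "\<phi> 1 - \<phi> 0 \<ge> g x \<bullet> d"
    using convex_on_imp_above_tangent[of UNIV \<phi> 0 1 "g x \<bullet> d"] by simp
  then show ?thesis
    unfolding \<phi>_def d_def by simp
qed

lemma lipschitz_gradient_quadratic_upper_bound:
  fixes f :: "'a::real_inner \<Rightarrow> real"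
  assumes grad: "\<And>y. (f has_derivative (\<lambda>h. g y \<bullet> h)) (at y)"
    and smooth: "\<And>y z. norm (g y - g z) \<le> L * norm (y - z)"
  shows "f y \<le> f x + g x \<bullet> (y - x) + L / 2 * (norm (y - x))\<^sup>2"
proof -
  define d where "d = y - x"
  define \<psi> where "\<psi> t = f (x + t *\<^sub>R d) - t * (g x \<bullet> d) - L / 2 * t\<^sup>2 * (norm d)\<^sup>2" for t
  have "\<psi> 1 \<le> \<psi> 0"
  proof (rule DERIV_nonpos_imp_nonincreasing[of 0 1])
    fix t :: real
    assume t: "0 \<le> t" "t \<le> 1"
    have "(\<psi> has_real_derivative (g (x + t *\<^sub>R d) - g x) \<bullet> d - L * t * (norm d)\<^sup>2) (at t)"
      unfolding \<psi>_def using has_real_derivative_along_line[where x=x and t=t and d=d, OF grad]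
      by (auto intro!: derivative_eq_intros simp: inner_diff_left)
    moreover have "(g (x + t *\<^sub>R d) - g x) \<bullet> d \<le> L * t * (norm d)\<^sup>2"
    proof -
      have "(g (x + t *\<^sub>R d) - g x) \<bullet> d \<le> norm (g (x + t *\<^sub>R d) - g x) * norm d"
        by (rule norm_cauchy_schwarz)
      also have "\<dots> \<le> L * norm (t *\<^sub>R d) * norm d"
        using smooth[of "x + t *\<^sub>R d" x] by (simp add: mult_right_mono)
      finally show ?thesis
        using t by (simp add: power2_eq_square mult.assoc)
    qed
    ultimately show "\<exists>y. (\<psi> has_real_derivative y) (at t) \<and> y \<le> 0"
      by auto
  qed simp
  then show ?thesis
    unfolding \<psi>_def d_def by simp
qed

lemma gradient_step_descent:
  fixes f :: "'a::real_inner \<Rightarrow> real"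
  assumes grad: "\<And>y. (f has_derivative (\<lambda>h. g y \<bullet> h)) (at y)"
    and smooth: "\<And>y z. norm (g y - g z) \<le> L * norm (y - z)"
    and L: "L > 0"
  shows "f (x - (1 / L) *\<^sub>R g x) \<le> f x - (norm (g x))\<^sup>2 / (2 * L)"
proof -
  have "f (x - (1 / L) *\<^sub>R g x) \<le> f x - g x \<bullet> ((1 / L) *\<^sub>R g x) + L / 2 * (norm ((1 / L) *\<^sub>R g x))\<^sup>2"
    using lipschitz_gradient_quadratic_upper_bound[OF grad smooth, of "x - (1 / L) *\<^sub>R g x" x]
    by simp
  also have "\<dots> = f x - (norm (g x))\<^sup>2 / (2 * L)"
    using L by (simp add: power2_norm_eq_inner[symmetric] power2_eq_square field_simps)
  finally show ?thesis .
qed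

lemma minimizer_gap_ge_gradient_norm:
  fixes f :: "'a::real_inner \<Rightarrow> real"
  assumes grad: "\<And>y. (f has_derivative (\<lambda>h. g y \<bullet> h)) (at y)"
    and smooth: "\<And>y z. norm (g y - g z) \<le> L * norm (y - z)"
    and L: "L > 0"
    and minimizer: "\<And>y. f xstar \<le> f y"
  shows "(norm (g x))\<^sup>2 / (2 * L) \<le> f x - f xstar"
  using minimizer[of "x - (1 / L) *\<^sub>R g x"] gradient_step_descent[OF grad smooth L, of x] by simp

definition interpolation_gap :: "('a::real_inner \<Rightarrow> real) \<Rightarrow> ('a \<Rightarrow> 'a) \<Rightarrow> real \<Rightarrow> 'a \<Rightarrow> 'a \<Rightarrow> real"
  where "interpolation_gap f g L y z = f y - f z - g z \<bullet> (y - z) - (norm (g y - g z))\<^sup>2 / (2 * L)"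

lemma interpolation_gap_nonneg:
  fixes f :: "'a::real_inner \<Rightarrow> real"
  assumes grad: "\<And>y. (f has_derivative (\<lambda>h. g y \<bullet> h)) (at y)"
    and convex: "convex_on UNIV f"
    and smooth: "\<And>y z. norm (g y - g z) \<le> L * norm (y - z)"
    and L: "L > 0"
  shows "0 \<le> interpolation_gap f g L a b"
proof -
  define \<phi> where "\<phi> z = f z - g b \<bullet> z" for z
  have grad\<phi>: "(\<phi> has_derivative (\<lambda>h. (g y - g b) \<bullet> h)) (at y)" for y
    unfolding \<phi>_def inner_diff_left
    by (rule has_derivative_diff[OF grad]) (auto intro!: derivative_eq_intros)
  have smooth\<phi>: "norm ((g y - g b) - (g z - g b)) \<le> L * norm (y - z)" for y z
    using smooth by simp
  have "\<phi> b \<le> \<phi> (a - (1 / L) *\<^sub>R (g a - g b))"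
    using convex_on_gradient_inequality[OF grad convex, of b "a - (1 / L) *\<^sub>R (g a - g b)"]
    unfolding \<phi>_def inner_diff_right by linarith
  also have "\<dots> \<le> \<phi> a - (norm (g a - g b))\<^sup>2 / (2 * L)"
    using gradient_step_descent[OF grad\<phi> smooth\<phi> L] by simp
  finally show ?thesis
    unfolding \<phi>_def interpolation_gap_def by (simp add: inner_diff_right)
qed

(* With n = N - k remaining steps, mogm_delta n is the paper's delta_(k+1). *)

definition mogm_lambda :: "nat \<Rightarrow> real"
  where "mogm_lambda n = 6 / (real (n + 1) * real (n + 2))"

definition mogm_delta :: "nat \<Rightarrow> real"
  where "mogm_delta n = 12 / (real (n + 1) * real (n + 2) * real (n + 3))"

lemma mogm_delta_eq_diff: "mogm_delta n = mogm_lambda n - mogm_lambda (Suc n)"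
proof -
  have "real n + 1 > 0" "real n + 2 > 0" "real n + 3 > 0" by linarith+
  then show ?thesis
    unfolding mogm_delta_def mogm_lambda_def by (simp add: divide_simps)
qed

lemma sum_mogm_delta: "(\<Sum>k<N. mogm_delta (N - k)) = 1 - mogm_lambda (Suc N)"
proof (induction N)
  case 0
  then show ?case by (simp add: mogm_lambda_def)
next
  case (Suc N)
  then show ?case
    unfolding sum.lessThan_Suc_shift by (simp add: mogm_delta_eq_diff[of "Suc N"])
qed

definition mogm_potential :: "real \<Rightarrow> nat \<Rightarrow> real \<Rightarrow> 'a::real_inner \<Rightarrow> 'a \<Rightarrow> real"
  where "mogm_potential L n F G V =
    - mogm_lambda (Suc n) * (F + (norm G)\<^sup>2 / (2 * L)) - real (n + 1) * (G \<bullet> V)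
    - real (n * (n + 1) * (n + 2) * (n + 3)) / 24 * L * (norm V)\<^sup>2"

lemma mogm_step_identity:
  fixes f :: "'a::real_inner \<Rightarrow> real" and n :: nat
  assumes L: "L > 0" and n: "n \<ge> 1"
    and v': "v' = v + (mogm_delta n / L) *\<^sub>R g y"
    and y': "y' = y - (1 / L) *\<^sub>R g y - (real (n * (n + 1) * (n + 2)) / 6) *\<^sub>R v'"
  shows "mogm_lambda n * interpolation_gap f g L y y' - mogm_delta n * (f y - g y \<bullet> y)
      - L * (v' \<bullet> y') + L * (v \<bullet> y)
    = mogm_potential L (n - 1) (f y') (g y') v' - mogm_potential L n (f y) (g y) v"
proof -
  obtain m where m: "n = Suc m" using n by (cases n) auto
  define a where "a = real n + 1"
  have a: "a \<ge> 2" using n unfolding a_def by simp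
  define c where "c = mogm_delta n / L"
  define t where "t = real (n * (n + 1) * (n + 2)) / 6"
  have v'_eq: "v' = v + c *\<^sub>R g y" using v' c_def by simp
  have y'_eq: "y' = y - (1 / L + t * c) *\<^sub>R g y - t *\<^sub>R v"
    using y' unfolding v'_eq t_def by (simp add: algebra_simps)
  obtain b d where bd: "b = a + 1" "d = a + 2" by blast
  have pos: "a > 0" "b > 0" "d > 0" using a bd by simp_all
  have coeffs: "c = 12 / (L * a * b * d)" "t = (a - 1) * a * b / 6"
    "mogm_lambda n = 6 / (a * b)" "mogm_lambda (Suc n) = 6 / (b * d)"
    "mogm_lambda (Suc (n - 1)) = 6 / (a * b)"
    "real (n - 1 + 1) = a - 1" "real (n + 1) = a"
    "real ((n - 1) * (n - 1 + 1) * (n - 1 + 2) * (n - 1 + 3)) = (a - 2) * (a - 1) * a * b"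
    "real (n * (n + 1) * (n + 2) * (n + 3)) = (a - 1) * a * b * d"
    "mogm_delta n = 12 / (a * b * d)"
    unfolding c_def t_def mogm_delta_def mogm_lambda_def a_def bd m by (simp_all add: algebra_simps)
  have inner_expansions:
    "(norm (g y - g y'))\<^sup>2 = g y \<bullet> g y - 2 * (g y \<bullet> g y') + g y' \<bullet> g y'"
    "g y' \<bullet> (y - y') = (1 / L + t * c) * (g y \<bullet> g y') + t * (g y' \<bullet> v)"
    "v' \<bullet> y' = v \<bullet> y + c * (g y \<bullet> y) - (1 / L + t * c) * (g y \<bullet> v + c * (g y \<bullet> g y))
       - t * (v \<bullet> v + c * (g y \<bullet> v))"
    "g y' \<bullet> v' = g y' \<bullet> v + c * (g y \<bullet> g y')"
    "(norm v')\<^sup>2 = v \<bullet> v + 2 * c * (g y \<bullet> v) + c * c * (g y \<bullet> g y)"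
    "(norm (g y'))\<^sup>2 = g y' \<bullet> g y'" "(norm (g y))\<^sup>2 = g y \<bullet> g y" "(norm v)\<^sup>2 = v \<bullet> v"
    unfolding power2_norm_eq_inner y'_eq v'_eq by (simp_all add: inner_commute algebra_simps)
  show ?thesis
    unfolding interpolation_gap_def mogm_potential_def inner_expansions coeffs
    \<comment> \<open>keeping \<open>b = a + 1\<close> and \<open>d = a + 2\<close> opaque lets \<open>field_simps\<close> clear the denominators\<close>
    using L pos apply (simp add: field_simps)
    unfolding bd by algebra
qed

locale mogm_iteration =
  fixes L :: real and N :: nat and g :: "'a::real_inner \<Rightarrow> 'a" and x v :: "nat \<Rightarrow> 'a"
  assumes L_pos: "L > 0"
    and v_init: "v 0 = 0"
    and v_step: "\<And>k. k < N \<Longrightarrow> v (Suc k) = v k +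
        (12 / (L * real (N - k + 1) * real (N - k + 2) * real (N - k + 3))) *\<^sub>R g (x k)"
    and x_step: "\<And>k. k < N \<Longrightarrow> x (Suc k) = x k - (1 / L) *\<^sub>R g (x k)
        - (real ((N - k) * (N - k + 1) * (N - k + 2)) / 6) *\<^sub>R v (Suc k)"
begin

lemma v_step_mogm_delta: "k < N \<Longrightarrow> v (Suc k) = v k + (mogm_delta (N - k) / L) *\<^sub>R g (x k)"
  using v_step by (simp add: mogm_delta_def mult.assoc)

lemma scaled_v_eq_sum: "m \<le> N \<Longrightarrow> L *\<^sub>R v m = (\<Sum>k<m. mogm_delta (N - k) *\<^sub>R g (x k))"
proof (induction m)
  case 0
  then show ?case by (simp add: v_init)
next
  case (Suc m)
  then show ?case
    using L_pos by (simp add: v_step_mogm_delta scaleR_add_right)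
qed

lemma potential_telescope:
  fixes f :: "'a \<Rightarrow> real"
  defines "\<Phi> k \<equiv> mogm_potential L (N - k) (f (x k)) (g (x k)) (v k) + L * (v k \<bullet> x k)"
  assumes "m \<le> N"
  shows "(\<Sum>k<m. mogm_lambda (N - k) * interpolation_gap f g L (x k) (x (Suc k))
      - mogm_delta (N - k) * (f (x k) - g (x k) \<bullet> x k)) = \<Phi> m - \<Phi> 0"
proof -
  have "mogm_lambda (N - k) * interpolation_gap f g L (x k) (x (Suc k))
      - mogm_delta (N - k) * (f (x k) - g (x k) \<bullet> x k) = \<Phi> (Suc k) - \<Phi> k" if "k < N" for k
  proof -
    have "1 \<le> N - k" using that by simp
    from mogm_step_identity[where n = "N - k" and f = f and g = g and y = "x k",
        OF L_pos this v_step_mogm_delta[OF that] x_step[OF that]]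
    show ?thesis
      unfolding \<Phi>_def by (simp add: diff_diff_left)
  qed
  then show ?thesis
    using assms(2) by (simp add: sum_lessThan_telescope)
qed

lemma chain_gap_sum_eq:
  fixes f :: "'a \<Rightarrow> real"
  shows "(\<Sum>k<N. mogm_lambda (N - k) * interpolation_gap f g L (x k) (x (Suc k)))
    = (\<Sum>k<N. mogm_delta (N - k) * (f (x k) - g (x k) \<bullet> x k))
      - (f (x N) + (norm (g (x N)))\<^sup>2 / (2 * L)) - g (x N) \<bullet> v N + L * (v N \<bullet> x N)
      + mogm_lambda (Suc N) * (f (x 0) + (norm (g (x 0)))\<^sup>2 / (2 * L))"
  using potential_telescope[of N f] v_init
  by (simp add: sum_subtractf mogm_potential_def mogm_lambda_def)

lemma anchor_gap_sum_eq:
  fixes f :: "'a \<Rightarrow> real"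
  shows "(\<Sum>k<N. mogm_delta (N - k) * interpolation_gap f g L (x N) (x k))
    = (1 - mogm_lambda (Suc N)) * (f (x N) - (norm (g (x N)))\<^sup>2 / (2 * L))
      - (\<Sum>k<N. mogm_delta (N - k) * (f (x k) - g (x k) \<bullet> x k))
      - L * (v N \<bullet> x N) + g (x N) \<bullet> v N
      - (\<Sum>k<N. mogm_delta (N - k) * (norm (g (x k)))\<^sup>2) / (2 * L)"
proof -
  define \<delta> where "\<delta> k = mogm_delta (N - k)" for k
  have L: "L \<noteq> 0" using L_pos by simp
  have "\<delta> k * interpolation_gap f g L (x N) (x k)
      = \<delta> k * (f (x N) - (norm (g (x N)))\<^sup>2 / (2 * L)) - \<delta> k * (f (x k) - g (x k) \<bullet> x k)
        - (\<delta> k *\<^sub>R g (x k)) \<bullet> x N + g (x N) \<bullet> (\<delta> k *\<^sub>R g (x k)) / L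
        - \<delta> k * (norm (g (x k)))\<^sup>2 / (2 * L)" for k
    unfolding interpolation_gap_def power2_norm_eq_inner
    using L by (simp add: inner_simps inner_commute field_simps)
  then have "(\<Sum>k<N. \<delta> k * interpolation_gap f g L (x N) (x k))
      = (\<Sum>k<N. \<delta> k) * (f (x N) - (norm (g (x N)))\<^sup>2 / (2 * L))
        - (\<Sum>k<N. \<delta> k * (f (x k) - g (x k) \<bullet> x k))
        - (\<Sum>k<N. \<delta> k *\<^sub>R g (x k)) \<bullet> x N + g (x N) \<bullet> (\<Sum>k<N. \<delta> k *\<^sub>R g (x k)) / L
        - (\<Sum>k<N. \<delta> k * (norm (g (x k)))\<^sup>2) / (2 * L)"
    by (simp add: sum_subtractf sum.distrib sum_distrib_right inner_sum_left inner_sum_right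
        sum_divide_distrib)
  then show ?thesis
    unfolding \<delta>_def sum_mogm_delta scaled_v_eq_sum[OF order_refl, symmetric]
    using L by simp
qed

lemma weighted_gap_sum_eq:
  fixes f :: "'a \<Rightarrow> real"
  shows "(\<Sum>k<N. mogm_lambda (N - k) * interpolation_gap f g L (x k) (x (Suc k)))
      + (\<Sum>k<N. mogm_delta (N - k) * interpolation_gap f g L (x N) (x k))
    = mogm_lambda (Suc N) *
        (f (x 0) + (norm (g (x 0)))\<^sup>2 / (2 * L) - f (x N) + (norm (g (x N)))\<^sup>2 / (2 * L))
      - (\<Sum>k\<le>N. mogm_delta (N - k) * (norm (g (x k)))\<^sup>2) / (2 * L)"
proof -
  have "(\<Sum>k\<le>N. mogm_delta (N - k) * (norm (g (x k)))\<^sup>2)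
      = (\<Sum>k<N. mogm_delta (N - k) * (norm (g (x k)))\<^sup>2) + 2 * (norm (g (x N)))\<^sup>2"
    unfolding lessThan_Suc_atMost[symmetric] by (simp add: mogm_delta_def)
  then show ?thesis
    unfolding chain_gap_sum_eq anchor_gap_sum_eq using L_pos by (simp add: field_simps)
qed

end

theorem theorem2:
  fixes f :: "'a::euclidean_space \<Rightarrow> real"
    and g :: "'a \<Rightarrow> 'a"
    and L \<Delta>0 :: real
    and xstar x0 :: 'a
    and N :: nat
    and x v :: "nat \<Rightarrow> 'a"
  assumes L_pos: "L > 0"
    and grad: "\<And>y. (f has_derivative (\<lambda>h. g y \<bullet> h)) (at y)"
    and convex: "convex_on UNIV f"
    and smooth: "\<And>y z. norm (g y - g z) \<le> L * norm (y - z)"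
    and minimizer: "\<And>y. f xstar \<le> f y"
    and init_gap: "f x0 - f xstar \<le> \<Delta>0"
    and N_ge: "N \<ge> 1"
    and x_init: "x 0 = x0"
    and v_init: "v 0 = 0"
    and v_step: "\<And>k. k < N \<Longrightarrow> v (Suc k) = v k +
        (12 / (L * real (N - k + 1) * real (N - k + 2) * real (N - k + 3))) *\<^sub>R g (x k)"
    and x_step: "\<And>k. k < N \<Longrightarrow> x (Suc k) = x k - (1 / L) *\<^sub>R g (x k)
        - (real ((N - k) * (N - k + 1) * (N - k + 2)) / 6) *\<^sub>R v (Suc k)"
  shows "(\<Sum>k = 0..N. (12 / (real (N - k + 1) * real (N - k + 2) * real (N - k + 3))) / 2
            * (norm (g (x k)))\<^sup>2) \<le> 12 * L * \<Delta>0 / (real (N + 2) * real (N + 3))"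
proof -
  interpret mogm_iteration L N g x v
    using L_pos v_init v_step x_step by unfold_locales
  define \<rho> where "\<rho> = mogm_lambda (Suc N)"
  have \<rho>: "\<rho> \<ge> 0" unfolding \<rho>_def mogm_lambda_def by simp
  have gap_nonneg: "0 \<le> interpolation_gap f g L y z" for y z
    using interpolation_gap_nonneg[OF grad convex smooth L_pos] .
  have grad_bound: "(norm (g y))\<^sup>2 / (2 * L) \<le> f y - f xstar" for y
    using minimizer_gap_ge_gradient_norm[OF grad smooth L_pos minimizer] .
  have "0 \<le> (\<Sum>k<N. mogm_lambda (N - k) * interpolation_gap f g L (x k) (x (Suc k)))
      + (\<Sum>k<N. mogm_delta (N - k) * interpolation_gap f g L (x N) (x k))"
    by (intro add_nonneg_nonneg sum_nonneg mult_nonneg_nonneg gap_nonneg)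
      (simp_all add: mogm_lambda_def mogm_delta_def)
  then have "(\<Sum>k\<le>N. mogm_delta (N - k) * (norm (g (x k)))\<^sup>2) / (2 * L)
      \<le> \<rho> * (f x0 + (norm (g x0))\<^sup>2 / (2 * L) - f (x N) + (norm (g (x N)))\<^sup>2 / (2 * L))"
    using weighted_gap_sum_eq[of f] x_init unfolding \<rho>_def by simp
  also have "\<dots> \<le> \<rho> * (2 * \<Delta>0)"
    using grad_bound[of x0] grad_bound[of "x N"] init_gap \<rho> by (intro mult_left_mono) auto
  finally have "(\<Sum>k\<le>N. mogm_delta (N - k) * (norm (g (x k)))\<^sup>2) / 2 \<le> L * (\<rho> * (2 * \<Delta>0))"
    using L_pos by (simp add: field_simps)
  moreover have "L * (\<rho> * (2 * \<Delta>0)) = 12 * L * \<Delta>0 / (real (N + 2) * real (N + 3))"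
    unfolding \<rho>_def mogm_lambda_def by (simp add: algebra_simps)
  ultimately show ?thesis
    by (simp add: atMost_atLeast0 mogm_delta_def sum_divide_distrib)
qed

end
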